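(* Let $f:\Omega_D\to\mathbb{O}$ be a slice function, $p\in\Omega_D$, and $q=f(p)$. If $q\neq0$, then there exist $a,b\in\mathbb{O}\setminus\{0\}$ with $|b|=|a||q|$ such that the slice function $g=(f\cdot a)\cdot b$ satisfies $g(p)=|a|^2|q|^2>0$. Furthermore, if $p\notin\mathbb{R}\cup V(f'_s)$, one can take $a=\overline{f'_s(p)}$ and $b=f'_s(p)\,\overline q$.
   Context: Octonions $\mathbb{O}=\mathbb{H}+\ell\mathbb{H}$ (product $(a+\ell b)(c+\ell d)=(ac-d\bar b)+\ell(\bar a d+cb)$, conjugation $\overline{a+\ell b}=\bar a-\ell b$), identified with $\mathbb{R}^8$ with norm $|\cdot|$; $\mathbb S=\{I:I^2=-1\}$. $D\subset\mathbb{R}^2$ non-empty open, invariant under $(\alpha,\beta)\mapsto(\alpha,-\beta)$, $\Omega_D=\{\alpha+\beta I:(\alpha,\beta)\in D,I\in\mathbb S\}$, assumed connected. A slice function is $f(\alpha+\beta I)=F_1(\alpha,\beta)+IF_2(\alpha,\beta)$ for a stem function $(F_1,F_2):D\to\mathbb{O}^2$ ($F_1$ even, $F_2$ odd in $\beta$). For $c\in\mathbb{O}$, $f\cdot c$ is the slice function induced by $(F_1c,F_2c)$. The spherical derivative is $f'_s(\alpha+\beta I)=F_2(\alpha,\beta)/\beta$ on $\Omega_D\setminus\mathbb{R}$, and $V(f'_s)=\{x\in\Omega_D\setminus\mathbb{R}:f'_s(x)=0\}$. *)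

theory Defs
  imports "HOL-Analysis.Analysis"
begin

text \<open>Quaternions H = C + C j (Cayley-Dickson), octonions O = H + l H.
  As types these are products of complex numbers, so O carries the
  Euclidean structure (norm, topology) of R^8 from the library.\<close>

type_synonym quat = "complex \<times> complex"
type_synonym oct = "quat \<times> quat"

definition qmul :: "quat \<Rightarrow> quat \<Rightarrow> quat" where
  "qmul x y = (case x of (z1, z2) \<Rightarrow> case y of (w1, w2) \<Rightarrow>
      (z1 * w1 - z2 * cnj w2, z1 * w2 + z2 * cnj w1))"

definition qconj :: "quat \<Rightarrow> quat" where
  "qconj x = (case x of (z1, z2) \<Rightarrow> (cnj z1, - z2))"

definition omul :: "oct \<Rightarrow> oct \<Rightarrow> oct" where
  "omul x y = (case x of (a, b) \<Rightarrow> case y of (c, d) \<Rightarrow>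
      (qmul a c - qmul d (qconj b), qmul (qconj a) d + qmul c b))"

definition oconj :: "oct \<Rightarrow> oct" where
  "oconj x = (case x of (a, b) \<Rightarrow> (qconj a, - b))"

definition oreal :: "real \<Rightarrow> oct" where
  "oreal r = ((complex_of_real r, 0), 0)"

definition sphere_units :: "oct set" (\<open>\<bbbS>\<close>) where
  "\<bbbS> = {I. omul I I = oreal (-1)}"

definition OmegaD :: "(real \<times> real) set \<Rightarrow> oct set" where
  "OmegaD D = {oreal \<alpha> + \<beta> *\<^sub>R I | \<alpha> \<beta> I. (\<alpha>, \<beta>) \<in> D \<and> I \<in> \<bbbS>}"

definition slice_fun ::
  "(real \<times> real) set \<Rightarrow> (real \<times> real \<Rightarrow> oct) \<Rightarrow> (real \<times> real \<Rightarrow> oct) \<Rightarrow> (oct \<Rightarrow> oct) \<Rightarrow> bool" where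
  "slice_fun D F1 F2 f \<longleftrightarrow>
     (\<forall>\<alpha> \<beta>. (\<alpha>, \<beta>) \<in> D \<longrightarrow> F1 (\<alpha>, - \<beta>) = F1 (\<alpha>, \<beta>) \<and> F2 (\<alpha>, - \<beta>) = - F2 (\<alpha>, \<beta>)) \<and>
     (\<forall>\<alpha> \<beta> I. (\<alpha>, \<beta>) \<in> D \<longrightarrow> I \<in> \<bbbS> \<longrightarrow>
        f (oreal \<alpha> + \<beta> *\<^sub>R I) = F1 (\<alpha>, \<beta>) + omul I (F2 (\<alpha>, \<beta>)))"

definition sph_deriv :: "(real \<times> real) set \<Rightarrow> (real \<times> real \<Rightarrow> oct) \<Rightarrow> oct \<Rightarrow> oct" where
  "sph_deriv D F2 x = (SOME v. \<exists>\<alpha> \<beta> I. (\<alpha>, \<beta>) \<in> D \<and> I \<in> \<bbbS> \<and> \<beta> \<noteq> 0 \<and>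
       x = oreal \<alpha> + \<beta> *\<^sub>R I \<and> v = (1 / \<beta>) *\<^sub>R F2 (\<alpha>, \<beta>))"

definition V_sph :: "(real \<times> real) set \<Rightarrow> (real \<times> real \<Rightarrow> oct) \<Rightarrow> oct set" where
  "V_sph D F2 = {x \<in> OmegaD D - range oreal. sph_deriv D F2 x = 0}"

end

theory Submission
  imports Defs
begin

(* Let p = alpha + beta J and write F2(alpha,beta) = c v with c real, so that q = F1 + c J v.
   Take a = conj v and b = v conj q. Alternativity in the form (x y) conj y = |y|^2 x gives
   F1 a = q conj v - c |v|^2 J, while F2 a = c |v|^2 is real. As b is the conjugate of q conj v,
   the value (F1 a) b + J ((F2 a) b) of g at p collapses to |q conj v|^2 = |v|^2 |q|^2: the two
   terms c |v|^2 J (v conj q) cancel. Off the real axis and V(f'_s) one takes v = f'_s(p) and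
   c = beta; in general v = F2(alpha,beta) works, or v = 1 if this vanishes. *)

lemma oct_cases: obtains a b c d where "(x::oct) = ((a, b), (c, d))"
  by (metis prod.exhaust)

lemma power2_norm_oct:
  "(norm (((a, b), (c, d)) :: oct))\<^sup>2 = (cmod a)\<^sup>2 + (cmod b)\<^sup>2 + (cmod c)\<^sup>2 + (cmod d)\<^sup>2"
  by (simp add: norm_Pair)

lemmas cmod_power2_eq = complex_norm_square[unfolded of_real_power]

lemma omul_oconj_self: "omul x (oconj x) = oreal ((norm x)\<^sup>2)"
  by (cases x rule: oct_cases)
    (simp add: power2_norm_oct omul_def oconj_def qmul_def qconj_def oreal_def cmod_power2_eq
      zero_prod_def algebra_simps)

lemma oconj_omul: "oconj (omul x y) = omul (oconj y) (oconj x)"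
  by (cases x rule: oct_cases, cases y rule: oct_cases)
    (simp add: omul_def oconj_def qmul_def qconj_def algebra_simps)

lemma oconj_oconj [simp]: "oconj (oconj x) = x"
  by (cases x rule: oct_cases) (simp add: oconj_def qconj_def)

lemma norm_oconj [simp]: "norm (oconj x) = norm x"
  by (cases x rule: oct_cases) (simp add: oconj_def qconj_def norm_Pair)

lemma oconj_eq_0_iff [simp]: "oconj x = 0 \<longleftrightarrow> x = 0"
  by (metis norm_eq_zero norm_oconj)

lemma omul_omul_oconj: "omul (omul x y) (oconj y) = (norm y)\<^sup>2 *\<^sub>R x"
  by (cases x rule: oct_cases, cases y rule: oct_cases)
    (simp add: power2_norm_oct omul_def oconj_def qmul_def qconj_def scaleR_conv_of_real
      cmod_power2_eq algebra_simps)

lemma norm_omul: "norm (omul x y) = norm x * norm y"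
proof -
  have "complex_of_real ((norm (omul x y))\<^sup>2) = complex_of_real ((norm x * norm y)\<^sup>2)"
    by (cases x rule: oct_cases, cases y rule: oct_cases)
      (simp add: omul_def qmul_def qconj_def norm_Pair cmod_power2_eq algebra_simps)
  then have "(norm (omul x y))\<^sup>2 = (norm x * norm y)\<^sup>2"
    by (rule of_real_eq_iff[THEN iffD1])
  then show ?thesis
    by simp
qed

lemma omul_diff_left: "omul (x - y) z = omul x z - omul y z"
  by (cases x, cases y, cases z) (auto simp: omul_def qmul_def qconj_def algebra_simps)

lemma omul_scaleR_left: "omul (r *\<^sub>R x) y = r *\<^sub>R omul x y"
  by (cases x, cases y) (auto simp: omul_def qmul_def qconj_def scaleR_conv_of_real algebra_simps)

lemma omul_scaleR_right: "omul x (r *\<^sub>R y) = r *\<^sub>R omul x y"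
  by (cases x, cases y) (auto simp: omul_def qmul_def qconj_def scaleR_conv_of_real algebra_simps)

lemma omul_oreal_left: "omul (oreal r) x = r *\<^sub>R x"
  by (cases x)
    (auto simp: omul_def qmul_def qconj_def oreal_def zero_prod_def scaleR_conv_of_real)

lemma sphere_unitsD:
  assumes "I \<in> \<bbbS>"
  shows "Re (fst (fst I)) = 0" and "norm I = 1"
proof -
  obtain x1 y1 x2 y2 x3 y3 x4 y4 where I:
    "I = ((Complex x1 y1, Complex x2 y2), (Complex x3 y3, Complex x4 y4))"
    by (metis oct_cases complex.exhaust)
  from assms have "omul I I = oreal (-1)"
    by (simp add: sphere_units_def)
  then have eqs: "x1*x1 - y1*y1 - x2*x2 - y2*y2 - x3*x3 - y3*y3 - x4*x4 - y4*y4 = -1"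
    "x1*y1 = 0" "x1*x2 = 0" "x1*y2 = 0" "x1*x3 = 0" "x1*y3 = 0" "x1*x4 = 0" "x1*y4 = 0"
    unfolding I
    by (auto simp: omul_def qmul_def qconj_def oreal_def complex_eq_iff zero_prod_def algebra_simps)
  have x1: "x1 = 0"
  proof (rule ccontr)
    assume "x1 \<noteq> 0"
    with eqs have "x1*x1 = -1"
      by simp
    moreover have "x1*x1 \<ge> 0"
      by simp
    ultimately show False
      by linarith
  qed
  then show "Re (fst (fst I)) = 0"
    by (simp add: I)
  have "(norm I)\<^sup>2 = 1"
    unfolding I power2_norm_oct using eqs(1) x1 by (simp add: cmod_def power2_eq_square)
  then show "norm I = 1"
    using norm_ge_zero[of I] by (simp add: power2_eq_1_iff)
qed

lemma oreal_add_scaleR_sphere_eqD: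
  assumes "oreal \<alpha> + \<beta> *\<^sub>R I = oreal \<alpha>' + \<beta>' *\<^sub>R I'" and "I \<in> \<bbbS>" and "I' \<in> \<bbbS>"
  shows "\<alpha>' = \<alpha>" and "\<bar>\<beta>'\<bar> = \<bar>\<beta>\<bar>"
proof -
  have "Re (fst (fst (oreal \<alpha> + \<beta> *\<^sub>R I))) = Re (fst (fst (oreal \<alpha>' + \<beta>' *\<^sub>R I')))"
    using assms(1) by simp
  then show "\<alpha>' = \<alpha>"
    using sphere_unitsD(1)[OF assms(2)] sphere_unitsD(1)[OF assms(3)] by (simp add: oreal_def)
  then have "\<beta> *\<^sub>R I = \<beta>' *\<^sub>R I'"
    using assms(1) by simp
  then show "\<bar>\<beta>'\<bar> = \<bar>\<beta>\<bar>"
    using sphere_unitsD(2)[OF assms(2)] sphere_unitsD(2)[OF assms(3)] by (metis norm_scaleR mult_1_right)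
qed

lemma sph_deriv_eq:
  assumes "(\<alpha>, \<beta>) \<in> D" and "I \<in> \<bbbS>" and "\<beta> \<noteq> 0"
    and F2_odd: "\<forall>\<alpha> \<beta>. (\<alpha>, \<beta>) \<in> D \<longrightarrow> F2 (\<alpha>, - \<beta>) = - F2 (\<alpha>, \<beta>)"
  shows "sph_deriv D F2 (oreal \<alpha> + \<beta> *\<^sub>R I) = (1 / \<beta>) *\<^sub>R F2 (\<alpha>, \<beta>)"
proof -
  let ?P = "\<lambda>v. \<exists>\<alpha>' \<beta>' I'. (\<alpha>', \<beta>') \<in> D \<and> I' \<in> \<bbbS> \<and> \<beta>' \<noteq> 0 \<and>
       oreal \<alpha> + \<beta> *\<^sub>R I = oreal \<alpha>' + \<beta>' *\<^sub>R I' \<and> v = (1 / \<beta>') *\<^sub>R F2 (\<alpha>', \<beta>')"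
  have "?P ((1 / \<beta>) *\<^sub>R F2 (\<alpha>, \<beta>))"
    using assms by blast
  moreover have "v = (1 / \<beta>) *\<^sub>R F2 (\<alpha>, \<beta>)" if "?P v" for v
  proof -
    from that obtain \<alpha>' \<beta>' I' where "I' \<in> \<bbbS>" and eq: "oreal \<alpha> + \<beta> *\<^sub>R I = oreal \<alpha>' + \<beta>' *\<^sub>R I'"
      and v: "v = (1 / \<beta>') *\<^sub>R F2 (\<alpha>', \<beta>')"
      by blast
    have "\<alpha>' = \<alpha>" and "\<bar>\<beta>'\<bar> = \<bar>\<beta>\<bar>"
      using oreal_add_scaleR_sphere_eqD[OF eq \<open>I \<in> \<bbbS>\<close> \<open>I' \<in> \<bbbS>\<close>] by auto
    then consider "\<beta>' = \<beta>" | "\<beta>' = - \<beta>"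
      by linarith
    then show ?thesis
      by cases (use v \<open>\<alpha>' = \<alpha>\<close> F2_odd \<open>(\<alpha>, \<beta>) \<in> D\<close> in simp_all)
  qed
  ultimately show ?thesis
    unfolding sph_deriv_def by (rule some_equality)
qed

lemma twisted_stem_value_real:
  assumes "F1 + omul J F2 = q" and "F2 = c *\<^sub>R v"
  shows "omul (omul F1 (oconj v)) (omul v (oconj q)) +
           omul J (omul (omul F2 (oconj v)) (omul v (oconj q))) = oreal ((norm v)\<^sup>2 * (norm q)\<^sup>2)"
proof -
  have "F1 = q - c *\<^sub>R omul J v"
    using assms by (auto simp: omul_scaleR_right algebra_simps)
  then have F1v: "omul F1 (oconj v) = omul q (oconj v) - (c * (norm v)\<^sup>2) *\<^sub>R J"
    by (simp add: omul_diff_left omul_scaleR_left omul_omul_oconj)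
  have F2v: "omul F2 (oconj v) = oreal (c * (norm v)\<^sup>2)"
    using assms(2) by (simp add: omul_scaleR_left omul_oconj_self oreal_def scaleR_conv_of_real zero_prod_def)
  have "omul (omul q (oconj v)) (omul v (oconj q)) = oreal ((norm v)\<^sup>2 * (norm q)\<^sup>2)"
    using omul_oconj_self[of "omul q (oconj v)"]
    by (simp add: oconj_omul norm_omul power_mult_distrib mult.commute)
  then show ?thesis
    by (simp add: F1v F2v omul_diff_left omul_scaleR_left omul_oreal_left omul_scaleR_right)
qed

definition normalizing_pair ::
  "(real \<times> real) set \<Rightarrow> (real \<times> real \<Rightarrow> oct) \<Rightarrow> (real \<times> real \<Rightarrow> oct) \<Rightarrow> oct \<Rightarrow> oct \<Rightarrow> oct \<Rightarrow> oct \<Rightarrow> bool"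
where
  "normalizing_pair D F1 F2 p q a b \<longleftrightarrow>
     a \<noteq> 0 \<and> b \<noteq> 0 \<and> norm b = norm a * norm q \<and>
     (\<forall>g. slice_fun D (\<lambda>z. omul (omul (F1 z) a) b) (\<lambda>z. omul (omul (F2 z) a) b) g \<longrightarrow>
          g p = oreal ((norm a)\<^sup>2 * (norm q)\<^sup>2)) \<and>
     (norm a)\<^sup>2 * (norm q)\<^sup>2 > 0"

lemma normalizing_pair_oconj:
  assumes "(\<alpha>, \<beta>) \<in> D" and "J \<in> \<bbbS>"
    and q: "F1 (\<alpha>, \<beta>) + omul J (F2 (\<alpha>, \<beta>)) = q" and "q \<noteq> 0"
    and F2: "F2 (\<alpha>, \<beta>) = c *\<^sub>R v" and "v \<noteq> 0"
  shows "normalizing_pair D F1 F2 (oreal \<alpha> + \<beta> *\<^sub>R J) q (oconj v) (omul v (oconj q))"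
  unfolding normalizing_pair_def
proof (intro conjI allI impI)
  fix g
  assume "slice_fun D (\<lambda>z. omul (omul (F1 z) (oconj v)) (omul v (oconj q)))
    (\<lambda>z. omul (omul (F2 z) (oconj v)) (omul v (oconj q))) g"
  then have "g (oreal \<alpha> + \<beta> *\<^sub>R J) = omul (omul (F1 (\<alpha>, \<beta>)) (oconj v)) (omul v (oconj q)) +
      omul J (omul (omul (F2 (\<alpha>, \<beta>)) (oconj v)) (omul v (oconj q)))"
    using assms(1,2) unfolding slice_fun_def by blast
  also have "\<dots> = oreal ((norm v)\<^sup>2 * (norm q)\<^sup>2)"
    by (rule twisted_stem_value_real[OF q F2])
  finally show "g (oreal \<alpha> + \<beta> *\<^sub>R J) = oreal ((norm (oconj v))\<^sup>2 * (norm q)\<^sup>2)"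
    by simp
next
  show "omul v (oconj q) \<noteq> 0"
    using \<open>q \<noteq> 0\<close> \<open>v \<noteq> 0\<close> by (metis norm_omul norm_oconj norm_eq_zero mult_eq_0_iff)
qed (use \<open>q \<noteq> 0\<close> \<open>v \<noteq> 0\<close> in \<open>simp_all add: norm_omul\<close>)

theorem corollary3p11:
  fixes D :: "(real \<times> real) set"
    and F1 F2 :: "real \<times> real \<Rightarrow> oct" and f :: "oct \<Rightarrow> oct" and p :: oct
  assumes D_open: "open D" and D_ne: "D \<noteq> {}"
    and D_sym: "\<forall>\<alpha> \<beta>. (\<alpha>, \<beta>) \<in> D \<longrightarrow> (\<alpha>, - \<beta>) \<in> D"
    and Omega_conn: "connected (OmegaD D)"
    and f_slice: "slice_fun D F1 F2 f"
    and p_in: "p \<in> OmegaD D"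
    and q_nz: "f p \<noteq> 0"
  shows "(\<exists>a b. a \<noteq> 0 \<and> b \<noteq> 0 \<and> norm b = norm a * norm (f p) \<and>
            (\<forall>g. slice_fun D (\<lambda>z. omul (omul (F1 z) a) b) (\<lambda>z. omul (omul (F2 z) a) b) g \<longrightarrow>
                 g p = oreal ((norm a)\<^sup>2 * (norm (f p))\<^sup>2)) \<and>
            (norm a)\<^sup>2 * (norm (f p))\<^sup>2 > 0)
       \<and> (p \<notin> range oreal \<union> V_sph D F2 \<longrightarrow>
            (let a = oconj (sph_deriv D F2 p); b = omul (sph_deriv D F2 p) (oconj (f p)) in
              a \<noteq> 0 \<and> b \<noteq> 0 \<and> norm b = norm a * norm (f p) \<and>
              (\<forall>g. slice_fun D (\<lambda>z. omul (omul (F1 z) a) b) (\<lambda>z. omul (omul (F2 z) a) b) g \<longrightarrow>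
                   g p = oreal ((norm a)\<^sup>2 * (norm (f p))\<^sup>2)) \<and>
              (norm a)\<^sup>2 * (norm (f p))\<^sup>2 > 0))"
proof -
  obtain \<alpha> \<beta> J where D: "(\<alpha>, \<beta>) \<in> D" and J: "J \<in> \<bbbS>" and p: "p = oreal \<alpha> + \<beta> *\<^sub>R J"
    using p_in unfolding OmegaD_def by blast
  have q: "F1 (\<alpha>, \<beta>) + omul J (F2 (\<alpha>, \<beta>)) = f p"
    using f_slice D J unfolding slice_fun_def p by metis
  note normalizing = normalizing_pair_oconj[where ?F1.0 = F1 and ?F2.0 = F2, OF D J q q_nz, folded p]
  have "\<exists>a b. normalizing_pair D F1 F2 p (f p) a b"
  proof (cases "F2 (\<alpha>, \<beta>) = 0")
    case True
    then have "F2 (\<alpha>, \<beta>) = 0 *\<^sub>R oreal 1" and "oreal 1 \<noteq> 0"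
      by (auto simp: oreal_def zero_prod_def)
    then show ?thesis
      using normalizing by blast
  next
    case False
    then show ?thesis
      using normalizing[of 1] by (metis scaleR_one)
  qed
  moreover have "normalizing_pair D F1 F2 p (f p) (oconj (sph_deriv D F2 p))
      (omul (sph_deriv D F2 p) (oconj (f p)))" if p_off: "p \<notin> range oreal \<union> V_sph D F2"
  proof -
    have "\<beta> \<noteq> 0"
      using p_off p by auto
    then have "F2 (\<alpha>, \<beta>) = \<beta> *\<^sub>R sph_deriv D F2 p"
      using sph_deriv_eq[OF D J] f_slice by (simp add: p slice_fun_def)
    moreover have "sph_deriv D F2 p \<noteq> 0"
      using p_off p_in unfolding V_sph_def by blast
    ultimately show ?thesis
      using normalizing by blast
  qed
  ultimately show ?thesis
    unfolding normalizing_pair_def Let_def by blast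
qed

end
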